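(* For an American option $\xi$ and $j\in\{1,\ldots,d\}$, \[ \pi^{\mathrm{bg}}_j(\xi)=\max_{\chi\in\mathcal{X}}\ \min_{(\mathbb{Q},S)\in\bar{\mathcal{P}}_j}\mathbb{E}_{\mathbb{Q}}\big((\xi\cdot S)_\chi\big), \] and there exist $\hat\chi\in\mathcal{X}$ and $(\hat{\mathbb{Q}},\hat S)\in\bar{\mathcal{P}}_j$ such that \[ \pi^{\mathrm{bg}}_j(\xi)=\mathbb{E}_{\hat{\mathbb{Q}}}\big((\xi\cdot\hat S)_{\hat\chi}\big)=\min_{(\mathbb{Q},S)\in\bar{\mathcal{P}}_j}\mathbb{E}_{\mathbb{Q}}\big((\xi\cdot S)_{\hat\chi}\big). \]
   Context: Finite filtered probability space $(\Omega,\mathcal{F},\mathbb{P};(\mathcal{F}_t)_{t=0}^T)$, $\mathcal{F}_0$ trivial, $\mathcal{F}_T=2^\Omega$, $\mathbb{P}(\{\omega\})>0$. $\Omega_t$: atoms of $\mathcal{F}_t$. $\mathcal{L}_t$: $\mathcal{F}_t$-measurable $\mathbb{R}^d$-valued random variables. $d$ assets, $\mathcal{F}_t$-measurable exchange rates $\pi^{jk}_t>0$, $\pi^{jj}_t=1$. $\mathcal{K}^\mu_t$ ($\mu\in\Omega_t$): convex cone generated by $e^1,\ldots,e^d$ and $\pi^{jk}_t(\mu)e^j-e^k$; $\mathcal{K}_t=\{x\in\mathcal{L}_t:x(\mu)\in\mathcal{K}^\mu_t\ \forall\mu\}$. For a cone $A$, $A^\ast=\{y:y\cdot x\ge0\ \forall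 x\in A\}$; "$S_t\in\mathcal{K}^\ast_t\setminus\{0\}$" means $S_t(\mu)\in(\mathcal{K}^\mu_t)^\ast\setminus\{0\}$ for all $\mu\in\Omega_t$. Trading strategies $\Phi$: $y_0\in\mathbb{R}^d$, $y_t\in\mathcal{L}_{t-1}$, $y_{T+1}=0$. Mixed stopping times $\mathcal{X}$: adapted $[0,1]$-valued $\chi$ with $\sum_t\chi_t=1$. $(\xi\cdot S)_\chi=\sum_{t=0}^T\chi_t\,\xi_t\cdot S_t$. American option: adapted $\mathbb{R}^d$-valued $\xi$. $\Phi^{\mathrm{bg}}(\xi)$: pairs $(y,\chi)\in\Phi\times\mathcal{X}$ with $y_t+\chi_t\xi_t-y_{t+1}\in\mathcal{K}_t$ for $t=0,\ldots,T$. $\pi^{\mathrm{bg}}_j(\xi)=\sup\{-x\in\mathbb{R}:\exists(y,\chi)\in\Phi^{\mathrm{bg}}(\xi),\ xe^j=y_0\}$. $\bar{\mathcal{P}}_j$: the set of pairs $(\mathbb{Q},S)$ where $\mathbb{Q}$ is a probability measure on $\Omega$ absolutely continuous with respect to $\mathbb{P}$ and $S=(S_t)_{t=0}^T$ is an $\mathbb{R}^d$-valued $\mathbb{Q}$-martingale with $S_t\in\mathcal{K}^\ast_t\setminus\{0\}$ and $S^j_t=1$ for all $t$. Standing assumption: no arbitrage (no $y\in\Phi$ with $y_0=0$, $y_t-y_{t+1}\in\mathcal{K}_t$ for $t<T$ and $y_T-x\in\mathcal{K}_T$ for a nonzero componentwise non-negative $x\in\mathcal{L}_T$). *)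

theory Defs
  imports "HOL-Analysis.Analysis" "HOL-Library.Disjoint_Sets"
begin

(* Finite sample space: the finite type 'w (Omega = UNIV).
   Filtration: F t is the set of atoms Omega_t of F_t (a partition of Omega).
   Assets are indexed by the finite type 'd; vectors are real^'d. *)

definition filtration :: "nat \<Rightarrow> (nat \<Rightarrow> 'w set set) \<Rightarrow> bool" where
  "filtration T F \<longleftrightarrow>
     (\<forall>t\<le>T. partition_on UNIV (F t)) \<and>
     (\<forall>t<T. \<forall>B\<in>F (Suc t). \<exists>A\<in>F t. B \<subseteq> A) \<and>
     F 0 = {UNIV} \<and> F T = {{w} | w. True}"

definition meas :: "(nat \<Rightarrow> 'w set set) \<Rightarrow> nat \<Rightarrow> ('w \<Rightarrow> 'b) \<Rightarrow> bool" where
  "meas F t X \<longleftrightarrow> (\<forall>A\<in>F t. \<forall>w\<in>A. \<forall>w'\<in>A. X w = X w')"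

definition exchange_rates :: "nat \<Rightarrow> (nat \<Rightarrow> 'w set set) \<Rightarrow> (nat \<Rightarrow> 'w \<Rightarrow> 'd \<Rightarrow> 'd \<Rightarrow> real) \<Rightarrow> bool" where
  "exchange_rates T F rate \<longleftrightarrow>
     (\<forall>t\<le>T. meas F t (rate t) \<and> (\<forall>w j k. rate t w j k > 0) \<and> (\<forall>w j. rate t w j j = 1))"

definition coneK :: "(nat \<Rightarrow> 'w \<Rightarrow> 'd::finite \<Rightarrow> 'd \<Rightarrow> real) \<Rightarrow> nat \<Rightarrow> 'w \<Rightarrow> (real^'d) set" where
  "coneK rate t w = convex_cone hull
     ({axis i 1 | i. True} \<union> {rate t w j k *\<^sub>R axis j 1 - axis k 1 | j k. True})"

definition inK :: "(nat \<Rightarrow> 'w set set) \<Rightarrow> (nat \<Rightarrow> 'w \<Rightarrow> 'd::finite \<Rightarrow> 'd \<Rightarrow> real) \<Rightarrow> nat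
                   \<Rightarrow> ('w \<Rightarrow> real^'d) \<Rightarrow> bool" where
  "inK F rate t x \<longleftrightarrow> meas F t x \<and> (\<forall>w. x w \<in> coneK rate t w)"

definition dual_cone :: "(real^'d) set \<Rightarrow> (real^'d) set" where
  "dual_cone A = {y. \<forall>x\<in>A. 0 \<le> y \<bullet> x}"

definition trading_strategy :: "nat \<Rightarrow> (nat \<Rightarrow> 'w set set) \<Rightarrow> (nat \<Rightarrow> 'w \<Rightarrow> real^'d) \<Rightarrow> bool" where
  "trading_strategy T F y \<longleftrightarrow>
     (\<forall>w w'. y 0 w = y 0 w') \<and> (\<forall>t. 1 \<le> t \<and> t \<le> T \<longrightarrow> meas F (t - 1) (y t)) \<and>
     (\<forall>w. y (Suc T) w = 0)"

definition mixed_stopping :: "nat \<Rightarrow> (nat \<Rightarrow> 'w set set) \<Rightarrow> (nat \<Rightarrow> 'w \<Rightarrow> real) \<Rightarrow> bool" where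
  "mixed_stopping T F chi \<longleftrightarrow>
     (\<forall>t\<le>T. meas F t (chi t) \<and> (\<forall>w. 0 \<le> chi t w \<and> chi t w \<le> 1)) \<and>
     (\<forall>w. (\<Sum>t\<le>T. chi t w) = 1)"

definition american_option :: "nat \<Rightarrow> (nat \<Rightarrow> 'w set set) \<Rightarrow> (nat \<Rightarrow> 'w \<Rightarrow> real^'d) \<Rightarrow> bool" where
  "american_option T F xi \<longleftrightarrow> (\<forall>t\<le>T. meas F t (xi t))"

definition stopped_payoff :: "nat \<Rightarrow> (nat \<Rightarrow> 'w \<Rightarrow> real^'d) \<Rightarrow> (nat \<Rightarrow> 'w \<Rightarrow> real^'d)
                              \<Rightarrow> (nat \<Rightarrow> 'w \<Rightarrow> real) \<Rightarrow> 'w \<Rightarrow> real" where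
  "stopped_payoff T xi S chi w = (\<Sum>t\<le>T. chi t w * (xi t w \<bullet> S t w))"

definition expect :: "('w::finite \<Rightarrow> real) \<Rightarrow> ('w \<Rightarrow> real) \<Rightarrow> real" where
  "expect Q X = (\<Sum>w\<in>UNIV. Q w * X w)"

definition Phi_bg :: "nat \<Rightarrow> (nat \<Rightarrow> 'w set set) \<Rightarrow> (nat \<Rightarrow> 'w \<Rightarrow> 'd::finite \<Rightarrow> 'd \<Rightarrow> real)
                      \<Rightarrow> (nat \<Rightarrow> 'w \<Rightarrow> real^'d) \<Rightarrow> (nat \<Rightarrow> 'w \<Rightarrow> real^'d) \<Rightarrow> (nat \<Rightarrow> 'w \<Rightarrow> real) \<Rightarrow> bool" where
  "Phi_bg T F rate xi y chi \<longleftrightarrow> trading_strategy T F y \<and> mixed_stopping T F chi \<and>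
     (\<forall>t\<le>T. inK F rate t (\<lambda>w. y t w + chi t w *\<^sub>R xi t w - y (Suc t) w))"

definition pi_bg_set :: "nat \<Rightarrow> (nat \<Rightarrow> 'w set set) \<Rightarrow> (nat \<Rightarrow> 'w \<Rightarrow> 'd::finite \<Rightarrow> 'd \<Rightarrow> real)
                     \<Rightarrow> (nat \<Rightarrow> 'w \<Rightarrow> real^'d) \<Rightarrow> 'd \<Rightarrow> real set" where
  "pi_bg_set T F rate xi j = {- x | x. \<exists>y chi. Phi_bg T F rate xi y chi \<and> (\<forall>w. y 0 w = x *\<^sub>R axis j 1)}"

definition pi_bg :: "nat \<Rightarrow> (nat \<Rightarrow> 'w set set) \<Rightarrow> (nat \<Rightarrow> 'w \<Rightarrow> 'd::finite \<Rightarrow> 'd \<Rightarrow> real)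
                     \<Rightarrow> (nat \<Rightarrow> 'w \<Rightarrow> real^'d) \<Rightarrow> 'd \<Rightarrow> real" where
  "pi_bg T F rate xi j = Sup (pi_bg_set T F rate xi j)"

definition prob_ac :: "('w::finite \<Rightarrow> real) \<Rightarrow> ('w \<Rightarrow> real) \<Rightarrow> bool" where
  "prob_ac P Q \<longleftrightarrow> (\<forall>w. 0 \<le> Q w) \<and> (\<Sum>w\<in>UNIV. Q w) = 1 \<and> (\<forall>w. P w = 0 \<longrightarrow> Q w = 0)"

definition martingale :: "nat \<Rightarrow> (nat \<Rightarrow> 'w set set) \<Rightarrow> ('w::finite \<Rightarrow> real) \<Rightarrow> (nat \<Rightarrow> 'w \<Rightarrow> real^'d) \<Rightarrow> bool" where
  "martingale T F Q S \<longleftrightarrow> (\<forall>t\<le>T. meas F t (S t)) \<and>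
     (\<forall>t<T. \<forall>A\<in>F t. (\<Sum>w\<in>A. Q w *\<^sub>R S (Suc t) w) = (\<Sum>w\<in>A. Q w *\<^sub>R S t w))"

definition Pbar :: "nat \<Rightarrow> (nat \<Rightarrow> 'w set set) \<Rightarrow> (nat \<Rightarrow> 'w \<Rightarrow> 'd::finite \<Rightarrow> 'd \<Rightarrow> real) \<Rightarrow> ('w::finite \<Rightarrow> real)
                    \<Rightarrow> 'd \<Rightarrow> ('w \<Rightarrow> real) \<Rightarrow> (nat \<Rightarrow> 'w \<Rightarrow> real^'d) \<Rightarrow> bool" where
  "Pbar T F rate P j Q S \<longleftrightarrow> prob_ac P Q \<and> martingale T F Q S \<and>
     (\<forall>t\<le>T. \<forall>w. S t w \<in> dual_cone (coneK rate t w) - {0} \<and> S t w $ j = 1)"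

definition no_arbitrage :: "nat \<Rightarrow> (nat \<Rightarrow> 'w set set) \<Rightarrow> (nat \<Rightarrow> 'w \<Rightarrow> 'd::finite \<Rightarrow> 'd \<Rightarrow> real) \<Rightarrow> bool" where
  "no_arbitrage T F rate \<longleftrightarrow> \<not> (\<exists>y x. trading_strategy T F y \<and> (\<forall>w. y 0 w = 0) \<and>
     (\<forall>t<T. inK F rate t (\<lambda>w. y t w - y (Suc t) w)) \<and>
     meas F T x \<and> (\<forall>w i. 0 \<le> x w $ i) \<and> x \<noteq> (\<lambda>w. 0) \<and>
     inK F rate T (\<lambda>w. y T w - x w))"

end

theory Submission
  imports Defs
begin

text \<open>
  The buyer can pay \<open>p\<close> for the option and hedge with the mixed stopping time \<open>\<chi>\<close> exactly
  when \<open>-p e\<^sup>j + \<Sum>\<^sub>t \<chi>\<^sub>t \<xi>\<^sub>t\<close> lies in the cone \<open>\<Sum>\<^sub>t \<K>\<^sub>t\<close> of the finite-dimensional space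
  \<open>(\<real>\<^sup>d)\<^sup>\<Omega>\<close>. This cone is finitely generated, hence closed, and its dual cone normalised
  at \<open>e\<^sup>j\<close> consists exactly of the vectors \<open>\<Q> S\<^sub>T\<close> with \<open>(\<Q>, S) \<in> \<P>\<^sub>j\<close>: one inclusion is
  the tower property; for the other, \<open>S\<close> is built from sums over atoms, using a strictly
  positive dual element (which exists by no-arbitrage) on \<open>\<Q>\<close>-null atoms.
  By separation, for each \<open>\<chi>\<close> the minimum of \<open>\<E>\<^sub>\<Q>((\<xi>\<cdot>S)\<^sub>\<chi>)\<close> over this compact set is
  itself a buyer's price and dominates every price hedged with \<open>\<chi>\<close>. The supremum over
  \<open>\<chi>\<close> is then attained because mixed stopping times form a compact set.
\<close>

lemma convex_cone_sum:
  assumes S: "convex_cone S" and "finite I" and "\<And>i. i \<in> I \<Longrightarrow> f i \<in> S"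
  shows "sum f I \<in> S"
  using assms(2,3)
  by (induction I rule: finite_induct)
     (auto simp: convex_cone_contains_0[OF S] convex_cone_add[OF S])

lemma separating_hyperplane_closed_cone_point:
  fixes S :: "'a::euclidean_space set"
  assumes "closed S" "convex_cone S" "p \<notin> S"
  shows "\<exists>L. (\<forall>a\<in>S. 0 \<le> L \<bullet> a) \<and> L \<bullet> p < 0"
proof -
  have "convex S" using assms(2) unfolding convex_cone_def by blast
  then obtain a b where ab: "a \<bullet> p < b" "\<forall>x\<in>S. b < a \<bullet> x"
    using separating_hyperplane_closed_point assms(1,3) by blast
  have b: "b < 0" using ab(2) convex_cone_contains_0[OF assms(2)] by force
  have "0 \<le> a \<bullet> x" if x: "x \<in> S" for x
  proof (rule ccontr)
    assume neg: "\<not> 0 \<le> a \<bullet> x"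
    define c where "c = b / (a \<bullet> x)"
    have "0 \<le> c" using b neg unfolding c_def by (simp add: divide_nonpos_neg)
    then have "b < a \<bullet> (c *\<^sub>R x)" using ab(2) convex_cone_scaleR[OF assms(2) _ x] by blast
    moreover have "a \<bullet> (c *\<^sub>R x) = b" using neg unfolding c_def by simp
    ultimately show False by simp
  qed
  then show ?thesis using ab b by force
qed

lemma finite_family_convergent_subseq:
  fixes f :: "nat \<Rightarrow> 'i \<Rightarrow> real"
  assumes "finite I" "\<And>n i. i \<in> I \<Longrightarrow> f n i \<in> {0..1}"
  shows "\<exists>r l. strict_mono r \<and> (\<forall>i\<in>I. (\<lambda>n. f (r n) i) \<longlonglongrightarrow> l i)"
  using assms
proof (induction I rule: finite_induct)
  case empty
  have "strict_mono (id :: nat \<Rightarrow> nat)" by (simp add: strict_mono_def)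
  then show ?case by blast
next
  case (insert i I)
  obtain r l where r: "strict_mono r" and l: "\<forall>i'\<in>I. (\<lambda>n. f (r n) i') \<longlonglongrightarrow> l i'"
    using insert.IH insert.prems by blast
  have "seq_compact {0..1::real}" by (rule compact_imp_seq_compact) simp
  then obtain l0 r2 where r2: "strict_mono r2" and l0: "((\<lambda>n. f (r n) i) \<circ> r2) \<longlonglongrightarrow> l0"
    using insert.prems unfolding seq_compact_def by (metis insertI1)
  have "\<forall>i'\<in>insert i I. (\<lambda>n. f ((r \<circ> r2) n) i') \<longlonglongrightarrow> (l(i := l0)) i'"
  proof
    fix i' assume i': "i' \<in> insert i I"
    show "(\<lambda>n. f ((r \<circ> r2) n) i') \<longlonglongrightarrow> (l(i := l0)) i'"
    proof (cases "i' = i")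
      case True then show ?thesis using l0 by (simp add: comp_def)
    next
      case False
      then have "((\<lambda>n. f (r n) i') \<circ> r2) \<longlonglongrightarrow> l i'"
        using i' l r2 LIMSEQ_subseq_LIMSEQ by blast
      then show ?thesis using False by (simp add: comp_def)
    qed
  qed
  then show ?case using strict_mono_o[OF r r2] by blast
qed

lemma meas_comp2:
  assumes "meas F t x" "meas F t y"
  shows "meas F t (\<lambda>w. f (x w) (y w))"
  using assms unfolding meas_def by metis

lemma meas_comp: "meas F t x \<Longrightarrow> meas F t (\<lambda>w. f (x w))"
  unfolding meas_def by metis

lemma meas_const: "meas F t (\<lambda>w. c)"
  unfolding meas_def by simp

lemma mixed_stopping_at_0: "mixed_stopping T F (\<lambda>t w. if t = 0 then 1 else 0)"
  unfolding mixed_stopping_def meas_def by simp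

lemma meas_sum:
  assumes "\<And>s. s \<in> I \<Longrightarrow> meas F t (f s)"
  shows "meas F t (\<lambda>w. \<Sum>s\<in>I. f s w)"
  unfolding meas_def
proof (intro ballI)
  fix A w w' assume "A \<in> F t" "w \<in> A" "w' \<in> A"
  then have "f s w = f s w'" if "s \<in> I" for s using assms[OF that] unfolding meas_def by blast
  then show "(\<Sum>s\<in>I. f s w) = (\<Sum>s\<in>I. f s w')" by (intro sum.cong) auto
qed

definition coneK_gens ::
    "(nat \<Rightarrow> 'w \<Rightarrow> 'd::finite \<Rightarrow> 'd \<Rightarrow> real) \<Rightarrow> nat \<Rightarrow> 'w \<Rightarrow> (real^'d) set" where
  "coneK_gens rate t w =
     {axis i 1 | i. True} \<union> {rate t w a b *\<^sub>R axis a 1 - axis b 1 | a b. True}"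

lemma coneK_eq_hull: "coneK rate t w = convex_cone hull coneK_gens rate t w"
  unfolding coneK_def coneK_gens_def ..

lemma finite_coneK_gens: "finite (coneK_gens rate t w)"
proof -
  have "coneK_gens rate t w
      = range (\<lambda>i. axis i 1) \<union> range (\<lambda>(a, b). rate t w a b *\<^sub>R axis a 1 - axis b 1)"
    unfolding coneK_gens_def by auto
  then show ?thesis by simp
qed

lemma convex_cone_coneK: "convex_cone (coneK rate t w)"
  unfolding coneK_def by (rule convex_cone_convex_cone_hull)

lemma zero_in_coneK: "0 \<in> coneK rate t w"
  by (simp add: convex_cone_coneK convex_cone_contains_0)

lemma axis_in_coneK: "axis i 1 \<in> coneK rate t w"
  unfolding coneK_def by (rule hull_inc) auto

lemma exchange_in_coneK: "rate t w a b *\<^sub>R axis a 1 - axis b 1 \<in> coneK rate t w"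
  unfolding coneK_def by (rule hull_inc) auto

lemma dual_cone_scaleR: "s \<in> dual_cone K \<Longrightarrow> 0 \<le> c \<Longrightarrow> c *\<^sub>R s \<in> dual_cone K"
  unfolding dual_cone_def by auto

lemma dual_coneK_nonneg: "s \<in> dual_cone (coneK rate t w) \<Longrightarrow> 0 \<le> s $ i"
  using axis_in_coneK[of i rate t w] unfolding dual_cone_def by (auto simp: inner_axis)

lemma dual_coneK_le_rate: "s \<in> dual_cone (coneK rate t w) \<Longrightarrow> s $ k \<le> rate t w j k * s $ j"
  using exchange_in_coneK[of rate t w j k] unfolding dual_cone_def
  by (fastforce simp: inner_diff_right inner_axis)

lemma dual_coneK_eq_0:
  assumes s: "s \<in> dual_cone (coneK rate t w)" and "s $ j = 0"
  shows "s = 0"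
proof -
  have "s $ k = 0" for k
    using dual_coneK_le_rate[OF s, of k j] dual_coneK_nonneg[OF s, of k] assms(2) by simp
  then show ?thesis by (simp add: vec_eq_iff)
qed

lemma inK_add: "inK F rate t x \<Longrightarrow> inK F rate t y \<Longrightarrow> inK F rate t (\<lambda>w. x w + y w)"
  unfolding inK_def
  by (auto intro: meas_comp2 convex_cone_add[OF convex_cone_coneK])

lemma inK_scaleR: "inK F rate t x \<Longrightarrow> 0 \<le> c \<Longrightarrow> inK F rate t (\<lambda>w. c *\<^sub>R x w)"
  unfolding inK_def
  by (auto intro: meas_comp convex_cone_scaleR[OF convex_cone_coneK])

lemma inK_zero: "inK F rate t (\<lambda>w. 0)"
  unfolding inK_def by (simp add: meas_const zero_in_coneK)

definition indicator_vec :: "'w set \<Rightarrow> real^'d \<Rightarrow> real^'d^'w" where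
  "indicator_vec A v = (\<chi> w. if w \<in> A then v else 0)"

lemma linear_indicator_vec: "linear (indicator_vec A)"
  by (rule linearI) (auto simp: indicator_vec_def vec_eq_iff)

lemma inner_vec_lambda: "(L::real^'d^'w::finite) \<bullet> vec_lambda f = (\<Sum>w\<in>UNIV. L $ w \<bullet> f w)"
  by (simp add: inner_vec_def)

lemma mixed_stopping_limit:
  assumes c: "\<And>n. mixed_stopping T F (c n)"
    and lim: "\<And>t w. t \<le> T \<Longrightarrow> (\<lambda>n. c n t w) \<longlonglongrightarrow> chi t w"
  shows "mixed_stopping T F chi"
  unfolding mixed_stopping_def
proof (intro conjI allI impI)
  fix t assume t: "t \<le> T"
  have c_t: "meas F t (c n t) \<and> (\<forall>w. 0 \<le> c n t w \<and> c n t w \<le> 1)" for n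
    using c[of n] t unfolding mixed_stopping_def by blast
  show "meas F t (chi t)"
    unfolding meas_def
  proof (intro ballI)
    fix A w w' assume "A \<in> F t" "w \<in> A" "w' \<in> A"
    then have "(\<lambda>n. c n t w) = (\<lambda>n. c n t w')" using c_t unfolding meas_def by blast
    then show "chi t w = chi t w'" using lim[OF t, of w] lim[OF t, of w'] LIMSEQ_unique by metis
  qed
  fix w
  show "0 \<le> chi t w" using c_t by (intro LIMSEQ_le_const[OF lim[OF t]]) blast
  show "chi t w \<le> 1" using c_t by (intro LIMSEQ_le_const2[OF lim[OF t]]) blast
next
  fix w
  have "(\<lambda>n. \<Sum>t\<le>T. c n t w) \<longlonglongrightarrow> (\<Sum>t\<le>T. chi t w)"
    by (rule tendsto_sum) (use lim in auto)
  moreover have "(\<lambda>n. \<Sum>t\<le>T. c n t w) = (\<lambda>n. 1)"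
    using c unfolding mixed_stopping_def by auto
  ultimately show "(\<Sum>t\<le>T. chi t w) = 1" using LIMSEQ_unique tendsto_const by metis
qed

lemma mixed_stopping_convergent_subseq:
  fixes c :: "nat \<Rightarrow> nat \<Rightarrow> 'w::finite \<Rightarrow> real"
  assumes c: "\<And>n. mixed_stopping T F (c n)"
  shows "\<exists>r chi. strict_mono r \<and> mixed_stopping T F chi \<and>
           (\<forall>t\<le>T. \<forall>w. (\<lambda>n. c (r n) t w) \<longlonglongrightarrow> chi t w)"
proof -
  have "c n t w \<in> {0..1}" if "(t, w) \<in> {..T} \<times> UNIV" for n t w
    using c[of n] that unfolding mixed_stopping_def by auto
  then obtain r l where r: "strict_mono r"
    and l: "\<forall>i\<in>{..T} \<times> UNIV. (\<lambda>n. case i of (t, w) \<Rightarrow> c (r n) t w) \<longlonglongrightarrow> l i"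
    using finite_family_convergent_subseq[of "{..T} \<times> UNIV" "\<lambda>n (t, w). c n t w"] by fastforce
  define chi where "chi t w = l (t, w)" for t w
  have lim: "(\<lambda>n. c (r n) t w) \<longlonglongrightarrow> chi t w" if "t \<le> T" for t w
    using l that unfolding chi_def by fastforce
  have "mixed_stopping T F chi"
    by (rule mixed_stopping_limit[where c = "\<lambda>n. c (r n)"]) (use c lim in simp_all)
  then show ?thesis using r lim by blast
qed

locale finite_filtration =
  fixes T :: nat and F :: "nat \<Rightarrow> ('w::finite) set set"
  assumes filtration: "filtration T F"
begin

lemma partition_F: "t \<le> T \<Longrightarrow> partition_on UNIV (F t)"
  using filtration by (simp add: filtration_def)

lemma F_T: "F T = {{w} | w. True}"
  using filtration by (simp add: filtration_def)

lemma atom_exists: "t \<le> T \<Longrightarrow> \<exists>A\<in>F t. w \<in> A"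
  using partition_F[of t] unfolding partition_on_def by blast

lemma atom_unique: "t \<le> T \<Longrightarrow> A \<in> F t \<Longrightarrow> B \<in> F t \<Longrightarrow> w \<in> A \<Longrightarrow> w \<in> B \<Longrightarrow> A = B"
  using partition_F[of t] unfolding partition_on_def disjoint_def by blast

definition atom :: "nat \<Rightarrow> 'w \<Rightarrow> 'w set" where
  "atom t w = (THE A. A \<in> F t \<and> w \<in> A)"

lemma atom_in_F: "t \<le> T \<Longrightarrow> atom t w \<in> F t \<and> w \<in> atom t w"
  unfolding atom_def by (rule theI') (use atom_exists atom_unique in blast)

lemma atom_eq: "t \<le> T \<Longrightarrow> A \<in> F t \<Longrightarrow> w \<in> A \<Longrightarrow> atom t w = A"
  using atom_in_F atom_unique by blast

definition rep :: "'w set \<Rightarrow> 'w" where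
  "rep A = (SOME w. w \<in> A)"

lemma rep_in: "t \<le> T \<Longrightarrow> A \<in> F t \<Longrightarrow> rep A \<in> A"
proof -
  assume "t \<le> T" "A \<in> F t"
  then have "A \<noteq> {}" using partition_F[of t] partition_onD3 by metis
  then show ?thesis unfolding rep_def by (simp add: some_in_eq)
qed

lemma measD: "meas F t X \<Longrightarrow> A \<in> F t \<Longrightarrow> w \<in> A \<Longrightarrow> w' \<in> A \<Longrightarrow> X w = X w'"
  unfolding meas_def by blast

lemma meas_rep: "meas F t X \<Longrightarrow> t \<le> T \<Longrightarrow> A \<in> F t \<Longrightarrow> w \<in> A \<Longrightarrow> X w = X (rep A)"
  using measD rep_in by metis

lemma atom_refines: "t \<le> s \<Longrightarrow> s \<le> T \<Longrightarrow> B \<in> F s \<Longrightarrow> \<exists>A\<in>F t. B \<subseteq> A"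
proof (induction s arbitrary: B rule: dec_induct)
  case (step s)
  then obtain A' where "A' \<in> F s" "B \<subseteq> A'"
    using filtration unfolding filtration_def by (metis Suc_le_lessD)
  with step show ?case by (meson Suc_leD order_trans)
qed auto

lemma meas_mono: "meas F t X \<Longrightarrow> t \<le> s \<Longrightarrow> s \<le> T \<Longrightarrow> meas F s X"
  unfolding meas_def by (metis atom_refines subsetD)

lemma meas_T: "meas F T X"
  unfolding meas_def F_T by auto

lemma trading_strategy_partial_sums:
  assumes g: "\<And>s. s < T \<Longrightarrow> meas F s (g s)"
    and y: "\<And>t w. t \<le> T \<Longrightarrow> y t w = c + (\<Sum>s<t. g s w)" "\<And>w. y (Suc T) w = 0"
  shows "trading_strategy T F y"
  unfolding trading_strategy_def
proof (intro conjI allI impI)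
  fix t assume t: "1 \<le> t \<and> t \<le> T"
  have "meas F (t - 1) (g s)" if "s < t" for s
    by (rule meas_mono[OF g]) (use t that in auto)
  then have "meas F (t - 1) (\<lambda>w. c + (\<Sum>s<t. g s w))"
    by (rule meas_comp[OF meas_sum]) simp
  moreover have "y t = (\<lambda>w. c + (\<Sum>s<t. g s w))" using t y(1) by auto
  ultimately show "meas F (t - 1) (y t)" by simp
qed (simp_all add: y)

lemma sum_over_atoms:
  assumes "t \<le> T"
  shows "(\<Sum>w\<in>UNIV. f w) = (\<Sum>A\<in>F t. \<Sum>w\<in>A. f w)"
proof -
  have "\<Union>(F t) = UNIV" using partition_F[OF assms] unfolding partition_on_def by blast
  moreover have "(\<Sum>w\<in>\<Union>(F t). f w) = (\<Sum>A\<in>F t. \<Sum>w\<in>A. f w)"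
    by (rule sum.Union_disjoint[simplified]) (use atom_unique[OF assms] in auto)
  ultimately show ?thesis by simp
qed

lemma sum_over_subatoms:
  assumes "t < T" "A \<in> F t"
  shows "(\<Sum>w\<in>A. f w) = (\<Sum>B\<in>{B\<in>F (Suc t). B \<subseteq> A}. \<Sum>w\<in>B. f w)"
proof -
  have "\<Union>{B\<in>F (Suc t). B \<subseteq> A} = A"
  proof (intro equalityI subsetI)
    fix w assume w: "w \<in> A"
    obtain B where B: "B \<in> F (Suc t)" "w \<in> B" using atom_exists[of "Suc t" w] assms by auto
    obtain A' where "A' \<in> F t" "B \<subseteq> A'" using atom_refines[of t "Suc t" B] B assms by auto
    then have "B \<subseteq> A" using atom_unique[of t A' A w] w B assms by auto
    then show "w \<in> \<Union>{B\<in>F (Suc t). B \<subseteq> A}" using B by auto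
  qed auto
  moreover have "(\<Sum>w\<in>\<Union>{B\<in>F (Suc t). B \<subseteq> A}. f w) = (\<Sum>B\<in>{B\<in>F (Suc t). B \<subseteq> A}. \<Sum>w\<in>B. f w)"
    by (rule sum.Union_disjoint[simplified]) (use atom_unique[of "Suc t"] assms in auto)
  ultimately show ?thesis by simp
qed

lemma sum_atom_inner_meas:
  assumes "t \<le> T" "A \<in> F t" "meas F t X"
  shows "(\<Sum>w\<in>A. Q w * (V w \<bullet> X w)) = (\<Sum>w\<in>A. Q w *\<^sub>R V w) \<bullet> X (rep A)"
proof -
  have "(\<Sum>w\<in>A. Q w * (V w \<bullet> X w)) = (\<Sum>w\<in>A. Q w * (V w \<bullet> X (rep A)))"
    using meas_rep[OF assms(3,1,2)] by (intro sum.cong) auto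
  then show ?thesis by (simp add: inner_sum_left)
qed

lemma martingale_tower:
  assumes M: "martingale T F Q S" and X: "meas F t X" and "t \<le> s" and sT: "s \<le> T"
  shows "(\<Sum>w\<in>UNIV. Q w * (S s w \<bullet> X w)) = (\<Sum>w\<in>UNIV. Q w * (S t w \<bullet> X w))"
  using \<open>t \<le> s\<close>
proof (induction s rule: dec_induct)
  case (step n)
  then have n: "n < T" using sT by simp
  have Xn: "meas F n X" using meas_mono[OF X] step n by simp
  have "(\<Sum>w\<in>UNIV. Q w * (S (Suc n) w \<bullet> X w)) = (\<Sum>A\<in>F n. \<Sum>w\<in>A. Q w * (S (Suc n) w \<bullet> X w))"
    using n by (intro sum_over_atoms) simp
  also have "\<dots> = (\<Sum>A\<in>F n. (\<Sum>w\<in>A. Q w *\<^sub>R S (Suc n) w) \<bullet> X (rep A))"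
    using n Xn by (intro sum.cong[OF refl] sum_atom_inner_meas) auto
  also have "\<dots> = (\<Sum>A\<in>F n. (\<Sum>w\<in>A. Q w *\<^sub>R S n w) \<bullet> X (rep A))"
    using M n unfolding martingale_def by (intro sum.cong) auto
  also have "\<dots> = (\<Sum>A\<in>F n. \<Sum>w\<in>A. Q w * (S n w \<bullet> X w))"
    using n Xn by (intro sum.cong[OF refl] sum_atom_inner_meas[symmetric]) auto
  also have "\<dots> = (\<Sum>w\<in>UNIV. Q w * (S n w \<bullet> X w))"
    using n by (intro sum_over_atoms[symmetric]) simp
  finally show ?case using step.IH by (rule trans)
qed simp

lemma vec_eq_sum_atoms:
  assumes t: "t \<le> T" and k: "meas F t k"
  shows "(\<chi> w. k w) = (\<Sum>A\<in>F t. indicator_vec A (k (rep A)))"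
proof (rule vec_eq_iff[THEN iffD2], rule allI)
  fix w
  have "(\<Sum>A\<in>F t. indicator_vec A (k (rep A))) $ w = (\<Sum>A\<in>F t. if w \<in> A then k (rep A) else 0)"
    by (simp add: indicator_vec_def)
  also have "\<dots> = (\<Sum>A\<in>F t. if A = atom t w then k w else 0)"
  proof (rule sum.cong[OF refl])
    fix A assume A: "A \<in> F t"
    show "(if w \<in> A then k (rep A) else 0) = (if A = atom t w then k w else 0)"
    proof (cases "w \<in> A")
      case True
      then show ?thesis using atom_eq[OF t A True] meas_rep[OF k t A True] by simp
    next
      case False
      then show ?thesis using atom_in_F[OF t, of w] by auto
    qed
  qed
  also have "\<dots> = k w" using atom_in_F[OF t, of w] by (simp add: sum.delta')
  finally show "(\<chi> w. k w) $ w = (\<Sum>A\<in>F t. indicator_vec A (k (rep A))) $ w" by simp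
qed

end

locale market = finite_filtration T F
  for T :: nat and F :: "nat \<Rightarrow> ('w::finite) set set" +
  fixes rate :: "nat \<Rightarrow> 'w \<Rightarrow> 'd::finite \<Rightarrow> 'd \<Rightarrow> real" and j :: 'd
  assumes exchange_rates: "exchange_rates T F rate"
    and no_arbitrage: "no_arbitrage T F rate"
begin

lemma coneK_eq_on_atom:
  assumes "t \<le> T" "A \<in> F t" "w \<in> A" "w' \<in> A"
  shows "coneK rate t w' = coneK rate t w"
proof -
  have "meas F t (rate t)" using exchange_rates assms(1) by (simp add: exchange_rates_def)
  then have "rate t w' = rate t w" using measD assms(2-4) by metis
  then show ?thesis unfolding coneK_def by simp
qed

lemma inK_indicator:
  assumes t: "t \<le> T" and A: "A \<in> F t" and "w0 \<in> A" "c \<in> coneK rate t w0"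
  shows "inK F rate t (\<lambda>w. if w \<in> A then c else 0)"
  unfolding inK_def
proof
  show "meas F t (\<lambda>w. if w \<in> A then c else 0)"
    unfolding meas_def using atom_unique[OF t A] by metis
  show "\<forall>w. (if w \<in> A then c else 0) \<in> coneK rate t w"
    using coneK_eq_on_atom[OF t A assms(3)] assms(4) by (auto simp: zero_in_coneK)
qed

definition Ksum :: "(real^'d^'w) set" where
  "Ksum = {(\<chi> w. \<Sum>t\<le>T. k t w) | k. \<forall>t\<le>T. inK F rate t (k t)}"

lemma KsumI: "\<forall>t\<le>T. inK F rate t (k t) \<Longrightarrow> (\<chi> w. \<Sum>t\<le>T. k t w) \<in> Ksum"
  unfolding Ksum_def by blast

lemma KsumE:
  assumes "x \<in> Ksum"
  obtains k where "x = (\<chi> w. \<Sum>t\<le>T. k t w)" "\<forall>t\<le>T. inK F rate t (k t)"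
  using assms unfolding Ksum_def by blast

lemma Ksum_single:
  assumes t: "t \<le> T" and f: "inK F rate t f"
  shows "(\<chi> w. f w) \<in> Ksum"
proof -
  define k where "k = (\<lambda>s w. if s = t then f w else 0)"
  have "(\<Sum>s\<le>T. k s w) = f w" for w
    using t by (simp add: k_def)
  moreover have "inK F rate s (k s)" for s
    using f by (cases "s = t") (simp_all add: k_def inK_zero)
  ultimately show ?thesis using KsumI[of k] by simp
qed

lemma convex_cone_Ksum: "convex_cone Ksum"
  unfolding convex_cone_iff
proof (intro conjI ballI allI impI)
  have "(\<chi> w. 0) \<in> Ksum"
    using Ksum_single[of 0 "\<lambda>w. 0"] by (simp add: inK_zero)
  then show "0 \<in> Ksum" by (simp add: zero_vec_def)
next
  fix x y assume "x \<in> Ksum" "y \<in> Ksum"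
  then obtain k k' where "x = (\<chi> w. \<Sum>t\<le>T. k t w)" "\<forall>t\<le>T. inK F rate t (k t)"
    and "y = (\<chi> w. \<Sum>t\<le>T. k' t w)" "\<forall>t\<le>T. inK F rate t (k' t)"
    by (metis KsumE)
  moreover have "(\<chi> w. \<Sum>t\<le>T. k t w) + (\<chi> w. \<Sum>t\<le>T. k' t w) = (\<chi> w. \<Sum>t\<le>T. k t w + k' t w)"
    by (simp add: vec_eq_iff sum.distrib)
  ultimately show "x + y \<in> Ksum"
    using KsumI[of "\<lambda>t w. k t w + k' t w"] by (simp add: inK_add)
next
  fix x and c :: real assume "x \<in> Ksum" "0 \<le> c"
  moreover obtain k where "x = (\<chi> w. \<Sum>t\<le>T. k t w)" "\<forall>t\<le>T. inK F rate t (k t)"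
    using KsumE[OF \<open>x \<in> Ksum\<close>] by blast
  moreover have "c *\<^sub>R (\<chi> w. \<Sum>t\<le>T. k t w) = (\<chi> w. \<Sum>t\<le>T. c *\<^sub>R k t w)"
    by (simp add: vec_eq_iff scaleR_sum_right)
  ultimately show "c *\<^sub>R x \<in> Ksum"
    using KsumI[of "\<lambda>t w. c *\<^sub>R k t w"] by (simp add: inK_scaleR)
qed

definition Ksum_gens :: "(real^'d^'w) set" where
  "Ksum_gens = (\<Union>t\<in>{..T}. \<Union>A\<in>F t. indicator_vec A ` coneK_gens rate t (rep A))"

lemma Ksum_eq_hull: "Ksum = convex_cone hull Ksum_gens"
proof
  have "Ksum_gens \<subseteq> Ksum"
  proof
    fix x assume "x \<in> Ksum_gens"
    then obtain t A g where t: "t \<le> T" and A: "A \<in> F t" and g: "g \<in> coneK_gens rate t (rep A)"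
      and x: "x = indicator_vec A g"
      unfolding Ksum_gens_def by blast
    have "g \<in> coneK rate t (rep A)" unfolding coneK_eq_hull using g by (rule hull_inc)
    then show "x \<in> Ksum"
      using Ksum_single[OF t inK_indicator[OF t A rep_in[OF t A]]] by (simp add: x indicator_vec_def)
  qed
  then show "convex_cone hull Ksum_gens \<subseteq> Ksum"
    using hull_minimal convex_cone_Ksum by blast
next
  show "Ksum \<subseteq> convex_cone hull Ksum_gens"
  proof
    fix x assume "x \<in> Ksum"
    then obtain k where x: "x = (\<chi> w. \<Sum>t\<le>T. k t w)" and k: "\<forall>t\<le>T. inK F rate t (k t)"
      by (rule KsumE)
    have "x = (\<Sum>t\<le>T. \<chi> w. k t w)"
      unfolding x by (rule vec_eq_iff[THEN iffD2]) simp
    also have "\<dots> = (\<Sum>t\<le>T. \<Sum>A\<in>F t. indicator_vec A (k t (rep A)))"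
      using k by (intro sum.cong refl vec_eq_sum_atoms) (auto simp: inK_def)
    also have "\<dots> \<in> convex_cone hull Ksum_gens"
    proof (intro convex_cone_sum[OF convex_cone_convex_cone_hull] finite_atMost finite)
      fix t A assume t: "t \<in> {..T}" and A: "A \<in> F t"
      have "indicator_vec A (k t (rep A)) \<in> indicator_vec A ` (convex_cone hull coneK_gens rate t (rep A))"
        using k t unfolding inK_def coneK_eq_hull by blast
      also have "\<dots> = convex_cone hull (indicator_vec A ` coneK_gens rate t (rep A))"
        by (rule convex_cone_hull_linear_image[OF linear_indicator_vec, symmetric])
      also have "\<dots> \<subseteq> convex_cone hull Ksum_gens"
        by (rule hull_mono) (use t A in \<open>auto simp: Ksum_gens_def\<close>)
      finally show "indicator_vec A (k t (rep A)) \<in> convex_cone hull Ksum_gens" .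
    qed
    finally show "x \<in> convex_cone hull Ksum_gens" .
  qed
qed

lemma closed_Ksum: "closed Ksum"
  unfolding Ksum_eq_hull Ksum_gens_def
  by (intro closed_convex_cone_hull finite_UN_I finite_imageI finite_coneK_gens finite_atMost finite)

definition dual_Ksum :: "(real^'d^'w) set" where
  "dual_Ksum = {L. \<forall>a\<in>Ksum. 0 \<le> L \<bullet> a}"

definition numeraire :: "real^'d^'w" where
  "numeraire = (\<chi> w. axis j 1)"

definition pricing_functionals :: "(real^'d^'w) set" where
  "pricing_functionals = {L\<in>dual_Ksum. L \<bullet> numeraire = 1}"

lemma convex_cone_dual_Ksum: "convex_cone dual_Ksum"
  unfolding convex_cone_iff dual_Ksum_def by (auto simp: inner_add_left)

lemma dual_Ksum_separates: "p \<notin> Ksum \<Longrightarrow> \<exists>L\<in>dual_Ksum. L \<bullet> p < 0"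
  using separating_hyperplane_closed_cone_point[OF closed_Ksum convex_cone_Ksum]
  unfolding dual_Ksum_def by blast

lemma sum_atom_in_dual_coneK:
  assumes L: "L \<in> dual_Ksum" and t: "t \<le> T" and A: "A \<in> F t" and w0: "w0 \<in> A"
  shows "(\<Sum>w\<in>A. L $ w) \<in> dual_cone (coneK rate t w0)"
  unfolding dual_cone_def
proof (rule CollectI, rule ballI)
  fix c assume "c \<in> coneK rate t w0"
  then have "(\<chi> w. if w \<in> A then c else 0) \<in> Ksum"
    using Ksum_single[OF t inK_indicator[OF t A w0]] by blast
  then have "0 \<le> L \<bullet> (\<chi> w. if w \<in> A then c else 0)" using L unfolding dual_Ksum_def by blast
  also have "L \<bullet> (\<chi> w. if w \<in> A then c else 0) = (\<Sum>w\<in>A. L $ w) \<bullet> c"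
    by (simp add: inner_vec_lambda inner_sum_left if_distrib sum.If_cases)
  finally show "0 \<le> (\<Sum>w\<in>A. L $ w) \<bullet> c" .
qed

lemma dual_Ksum_component: "L \<in> dual_Ksum \<Longrightarrow> L $ w \<in> dual_cone (coneK rate T w)"
proof -
  have "{w} \<in> F T" using F_T by blast
  then show "L \<in> dual_Ksum \<Longrightarrow> L $ w \<in> dual_cone (coneK rate T w)"
    using sum_atom_in_dual_coneK[of L T "{w}" w] by simp
qed

lemma dual_Ksum_nonneg: "L \<in> dual_Ksum \<Longrightarrow> 0 \<le> L $ w $ i"
  by (rule dual_coneK_nonneg[OF dual_Ksum_component])

lemma inner_numeraire: "L \<bullet> numeraire = (\<Sum>w\<in>UNIV. L $ w $ j)"
  unfolding numeraire_def inner_vec_lambda by (simp add: inner_axis)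

lemma dual_Ksum_inner_numeraire_nonneg: "L \<in> dual_Ksum \<Longrightarrow> 0 \<le> L \<bullet> numeraire"
  unfolding inner_numeraire by (intro sum_nonneg dual_Ksum_nonneg)

definition functional_of :: "('w \<Rightarrow> real) \<Rightarrow> (nat \<Rightarrow> 'w \<Rightarrow> real^'d) \<Rightarrow> real^'d^'w" where
  "functional_of Q S = (\<chi> w. Q w *\<^sub>R S T w)"

lemma inner_functional_of:
  assumes M: "martingale T F Q S" and k: "\<forall>t\<le>T. meas F t (k t)"
  shows "functional_of Q S \<bullet> (\<chi> w. \<Sum>t\<le>T. k t w) = (\<Sum>t\<le>T. \<Sum>w\<in>UNIV. Q w * (S t w \<bullet> k t w))"
proof -
  have "functional_of Q S \<bullet> (\<chi> w. \<Sum>t\<le>T. k t w) = (\<Sum>t\<le>T. \<Sum>w\<in>UNIV. Q w * (S T w \<bullet> k t w))"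
    unfolding functional_of_def inner_vec_lambda
    by (simp add: inner_sum_right sum_distrib_left sum.swap[of _ UNIV])
  also have "\<dots> = (\<Sum>t\<le>T. \<Sum>w\<in>UNIV. Q w * (S t w \<bullet> k t w))"
  proof (rule sum.cong[OF refl])
    fix t assume "t \<in> {..T}"
    then show "(\<Sum>w\<in>UNIV. Q w * (S T w \<bullet> k t w)) = (\<Sum>w\<in>UNIV. Q w * (S t w \<bullet> k t w))"
      using martingale_tower[OF M, of t "k t" T] k by simp
  qed
  finally show ?thesis .
qed

lemma functional_of_in_pricing_functionals:
  assumes "Pbar T F rate P j Q S"
  shows "functional_of Q S \<in> pricing_functionals"
proof -
  have M: "martingale T F Q S" and Q: "prob_ac P Q"
    and S: "\<forall>t\<le>T. \<forall>w. S t w \<in> dual_cone (coneK rate t w) - {0} \<and> S t w $ j = 1"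
    using assms unfolding Pbar_def by auto
  have "0 \<le> functional_of Q S \<bullet> a" if "a \<in> Ksum" for a
  proof -
    obtain k where a: "a = (\<chi> w. \<Sum>t\<le>T. k t w)" and k: "\<forall>t\<le>T. inK F rate t (k t)"
      using KsumE[OF \<open>a \<in> Ksum\<close>] by blast
    have "0 \<le> S t w \<bullet> k t w" if "t \<le> T" for t w
      using S k that unfolding inK_def dual_cone_def by blast
    then have "0 \<le> (\<Sum>t\<le>T. \<Sum>w\<in>UNIV. Q w * (S t w \<bullet> k t w))"
      using Q unfolding prob_ac_def by (auto intro!: sum_nonneg)
    then show ?thesis using k unfolding a inK_def by (simp add: inner_functional_of[OF M])
  qed
  moreover have "functional_of Q S \<bullet> numeraire = 1"
    using S Q unfolding inner_numeraire functional_of_def prob_ac_def by simp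
  ultimately show ?thesis unfolding pricing_functionals_def dual_Ksum_def by blast
qed

lemma unit_claim_notin_Ksum: "- indicator_vec {w0} (axis j 1) \<notin> Ksum"
proof
  define x where "x = (\<lambda>w. if w = w0 then axis j (1::real) else 0)"
  assume "- indicator_vec {w0} (axis j 1) \<in> Ksum"
  then obtain k where xk: "- indicator_vec {w0} (axis j 1) = (\<chi> w. \<Sum>t\<le>T. k t w)"
    and k: "\<forall>t\<le>T. inK F rate t (k t)"
    by (rule KsumE)
  have sum_k: "(\<Sum>t\<le>T. k t w) = - x w" for w
  proof -
    have "(\<chi> w. \<Sum>t\<le>T. k t w) $ w = (- indicator_vec {w0} (axis j 1)) $ w" using xk by simp
    then show ?thesis unfolding x_def by (simp add: indicator_vec_def)
  qed
  text \<open>Liquidating the solvent positions \<open>k\<^sub>t\<close> one by one is an arbitrage delivering \<open>x\<close>.\<close>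
  define y where "y t w = (if t \<le> T then - (\<Sum>s<t. k s w) else 0)" for t w
  have "meas F s (\<lambda>w. - k s w)" if "s < T" for s
    using k that unfolding inK_def by (simp add: meas_comp)
  then have y: "trading_strategy T F y"
    by (rule trading_strategy_partial_sums[where c = 0]) (simp_all add: y_def sum_negf)
  have y0: "\<forall>w. y 0 w = 0" by (simp add: y_def)
  have steps: "\<forall>t<T. inK F rate t (\<lambda>w. y t w - y (Suc t) w)"
  proof (intro allI impI)
    fix t assume "t < T"
    then have "(\<lambda>w. y t w - y (Suc t) w) = k t" by (auto simp: y_def)
    then show "inK F rate t (\<lambda>w. y t w - y (Suc t) w)" using k \<open>t < T\<close> by simp
  qed
  have last: "inK F rate T (\<lambda>w. y T w - x w)"
  proof -
    have "y T w - x w = k T w" for w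
    proof -
      have "y T w - x w = - (\<Sum>t<T. k t w) + - x w" by (simp add: y_def)
      also have "- x w = (\<Sum>t<T. k t w) + k T w"
        using sum_k[of w] by (simp add: lessThan_Suc_atMost[symmetric])
      finally show ?thesis by simp
    qed
    then have "(\<lambda>w. y T w - x w) = k T" by auto
    then show ?thesis using k by simp
  qed
  have "x \<noteq> (\<lambda>w. 0)" by (metis x_def axis_eq_0_iff zero_neq_one)
  moreover have "\<forall>w i. 0 \<le> x w $ i" by (simp add: x_def axis_def)
  ultimately show False
    using no_arbitrage y y0 steps last meas_T[of x] unfolding no_arbitrage_def by blast
qed

lemma dual_Ksum_strictly_positive: "\<exists>L\<in>dual_Ksum. \<forall>w. 0 < L $ w $ j"
proof -
  have "\<exists>L\<in>dual_Ksum. 0 < L $ w0 $ j" for w0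
  proof -
    obtain L where "L \<in> dual_Ksum" "L \<bullet> (- indicator_vec {w0} (axis j 1)) < 0"
      using dual_Ksum_separates[OF unit_claim_notin_Ksum] by blast
    moreover have "L \<bullet> (- indicator_vec {w0} (axis j 1)) = - L $ w0 $ j"
      by (simp add: indicator_vec_def inner_vec_lambda inner_axis if_distrib cong: if_cong)
    ultimately show ?thesis by auto
  qed
  then obtain Lw where Lw: "\<And>w0. Lw w0 \<in> dual_Ksum" "\<And>w0. 0 < Lw w0 $ w0 $ j" by metis
  have "(\<Sum>w0\<in>UNIV. Lw w0) \<in> dual_Ksum"
    by (rule convex_cone_sum[OF convex_cone_dual_Ksum finite]) (use Lw in auto)
  moreover have "0 < (\<Sum>w0\<in>UNIV. Lw w0) $ w $ j" for w
  proof -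
    have "Lw w $ w $ j \<le> (\<Sum>w0\<in>UNIV. Lw w0 $ w $ j)"
      by (rule member_le_sum) (auto intro: dual_Ksum_nonneg Lw)
    then show ?thesis using Lw(2)[of w] by simp
  qed
  ultimately show ?thesis by blast
qed

lemma pricing_functionals_nonempty: "pricing_functionals \<noteq> {}"
proof -
  obtain L where L: "L \<in> dual_Ksum" "\<And>w. 0 < L $ w $ j"
    using dual_Ksum_strictly_positive by blast
  have "0 < L \<bullet> numeraire" unfolding inner_numeraire by (rule sum_pos) (use L(2) in auto)
  then have "(1 / (L \<bullet> numeraire)) *\<^sub>R L \<in> pricing_functionals"
    using convex_cone_scaleR[OF convex_cone_dual_Ksum _ L(1), of "1 / (L \<bullet> numeraire)"]
    unfolding pricing_functionals_def by simp
  then show ?thesis by blast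
qed

lemma compact_pricing_functionals: "compact pricing_functionals"
  unfolding compact_eq_bounded_closed
proof
  have "norm L \<le> (\<Sum>w\<in>UNIV. \<Sum>i\<in>UNIV. rate T w j i)" if L: "L \<in> pricing_functionals" for L
  proof -
    have LD: "L \<in> dual_Ksum" using L unfolding pricing_functionals_def by blast
    have "\<bar>L $ w $ i\<bar> \<le> rate T w j i" for w i
    proof -
      have "L $ w $ j \<le> (\<Sum>w'\<in>UNIV. L $ w' $ j)"
        by (rule member_le_sum) (auto intro: dual_Ksum_nonneg[OF LD])
      then have "L $ w $ j \<le> 1" using L unfolding pricing_functionals_def inner_numeraire by simp
      moreover have "0 < rate T w j i" using exchange_rates unfolding exchange_rates_def by blast
      ultimately have "rate T w j i * L $ w $ j \<le> rate T w j i" by (simp add: mult_left_le)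
      then show ?thesis
        using dual_coneK_le_rate[OF dual_Ksum_component[OF LD, of w], of i j] dual_Ksum_nonneg[OF LD]
        by simp
    qed
    then have "(\<Sum>w\<in>UNIV. norm (L $ w)) \<le> (\<Sum>w\<in>UNIV. \<Sum>i\<in>UNIV. rate T w j i)"
      by (intro sum_mono order_trans[OF norm_le_l1_cart]) simp
    moreover have "norm L \<le> (\<Sum>w\<in>UNIV. norm (L $ w))"
      unfolding norm_vec_def by (rule L2_set_le_sum) simp
    ultimately show ?thesis by linarith
  qed
  then show "bounded pricing_functionals" unfolding bounded_iff by blast
next
  have "pricing_functionals = (\<Inter>a\<in>Ksum. {L. 0 \<le> a \<bullet> L}) \<inter> {L. numeraire \<bullet> L = 1}"
    unfolding pricing_functionals_def dual_Ksum_def by (auto simp: inner_commute)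
  then show "closed pricing_functionals"
    by (simp add: closed_Int closed_INT closed_halfspace_ge closed_hyperplane)
qed

definition atom_sum :: "real^'d^'w \<Rightarrow> nat \<Rightarrow> 'w \<Rightarrow> real^'d" where
  "atom_sum L t w = (\<Sum>w'\<in>atom t w. L $ w')"

lemma atom_sum_eq: "t \<le> T \<Longrightarrow> A \<in> F t \<Longrightarrow> w \<in> A \<Longrightarrow> atom_sum L t w = (\<Sum>w'\<in>A. L $ w')"
  unfolding atom_sum_def using atom_eq by simp

lemma atom_sum_in_dual_coneK:
  assumes "L \<in> dual_Ksum" "t \<le> T"
  shows "atom_sum L t w \<in> dual_cone (coneK rate t w)"
  unfolding atom_sum_def using atom_in_F[OF assms(2), of w] by (intro sum_atom_in_dual_coneK assms) auto

text \<open>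
  The consistent price process induced by \<open>L\<close>; on atoms where \<open>L\<close> vanishes the process of a
  strictly positive \<open>L'\<close> is used instead.
\<close>

definition price_process :: "real^'d^'w \<Rightarrow> real^'d^'w \<Rightarrow> nat \<Rightarrow> 'w \<Rightarrow> real^'d" where
  "price_process L L' t w =
     (if 0 < atom_sum L t w $ j then (1 / atom_sum L t w $ j) *\<^sub>R atom_sum L t w
      else (1 / atom_sum L' t w $ j) *\<^sub>R atom_sum L' t w)"

context
  fixes L L' :: "real^'d^'w"
  assumes L: "L \<in> dual_Ksum" and L': "L' \<in> dual_Ksum" "\<And>w. 0 < L' $ w $ j"
begin

lemma price_process_in_dual_coneK:
  assumes t: "t \<le> T"
  shows "price_process L L' t w \<in> dual_cone (coneK rate t w) - {0} \<and> price_process L L' t w $ j = 1"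
proof -
  have pos: "0 < atom_sum L' t w $ j"
  proof -
    have "L' $ w $ j \<le> (\<Sum>w'\<in>atom t w. L' $ w' $ j)"
      by (rule member_le_sum) (use atom_in_F[OF t] dual_Ksum_nonneg[OF L'(1)] in auto)
    then show ?thesis using L'(2)[of w] unfolding atom_sum_def by simp
  qed
  have "(1 / v $ j) *\<^sub>R v \<in> dual_cone (coneK rate t w) - {0} \<and> ((1 / v $ j) *\<^sub>R v) $ j = 1"
    if "v \<in> dual_cone (coneK rate t w)" "0 < v $ j" for v
    using that dual_cone_scaleR[of v _ "1 / v $ j"] by auto
  then show ?thesis
    unfolding price_process_def
    using atom_sum_in_dual_coneK[OF L t] atom_sum_in_dual_coneK[OF L'(1) t] pos by simp
qed

lemma meas_price_process:
  assumes "t \<le> T"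
  shows "meas F t (price_process L L' t)"
  unfolding meas_def
proof (intro ballI)
  fix A w w' assume "A \<in> F t" "w \<in> A" "w' \<in> A"
  then have "atom t w = atom t w'" using atom_eq[OF assms] by simp
  then show "price_process L L' t w = price_process L L' t w'"
    unfolding price_process_def atom_sum_def by simp
qed

lemma sum_atom_price_process:
  assumes t: "t \<le> T" and A: "A \<in> F t"
  shows "(\<Sum>w\<in>A. L $ w $ j *\<^sub>R price_process L L' t w) = (\<Sum>w\<in>A. L $ w)"
proof -
  define \<sigma> where "\<sigma> = (\<Sum>w\<in>A. L $ w)"
  have S: "price_process L L' t w = (1 / \<sigma> $ j) *\<^sub>R \<sigma>" if "w \<in> A" "0 < \<sigma> $ j" for w
    using that atom_sum_eq[OF t A] unfolding price_process_def \<sigma>_def by simp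
  have \<sigma>j: "(\<Sum>w\<in>A. L $ w $ j) = \<sigma> $ j" unfolding \<sigma>_def by simp
  show ?thesis
  proof (cases "0 < \<sigma> $ j")
    case True
    have "(\<Sum>w\<in>A. L $ w $ j *\<^sub>R price_process L L' t w) = (\<Sum>w\<in>A. L $ w $ j *\<^sub>R ((1 / \<sigma> $ j) *\<^sub>R \<sigma>))"
      by (rule sum.cong[OF refl]) (simp add: S True)
    also have "\<dots> = (\<Sum>w\<in>A. L $ w $ j) *\<^sub>R ((1 / \<sigma> $ j) *\<^sub>R \<sigma>)"
      by (rule scaleR_sum_left[symmetric])
    also have "\<dots> = \<sigma>" using True \<sigma>j by simp
    finally show ?thesis unfolding \<sigma>_def .
  next
    case False
    obtain w0 where "w0 \<in> A" using rep_in[OF t A] by blast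
    then have \<sigma>_dual: "\<sigma> \<in> dual_cone (coneK rate t w0)"
      unfolding \<sigma>_def by (rule sum_atom_in_dual_coneK[OF L t A])
    then have "\<sigma> $ j = 0" using False dual_coneK_nonneg[OF \<sigma>_dual, of j] by simp
    then have "\<sigma> = 0" by (rule dual_coneK_eq_0[OF \<sigma>_dual])
    moreover have "\<forall>w\<in>A. L $ w $ j = 0"
      using sum_nonneg_eq_0_iff[of A "\<lambda>w. L $ w $ j"] \<sigma>j \<open>\<sigma> $ j = 0\<close> dual_Ksum_nonneg[OF L] by simp
    ultimately show ?thesis unfolding \<sigma>_def by simp
  qed
qed

lemma martingale_price_process: "martingale T F (\<lambda>w. L $ w $ j) (price_process L L')"
  unfolding martingale_def
proof (intro conjI allI impI ballI)
  fix t A assume t: "t < T" and A: "A \<in> F t"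
  have "(\<Sum>w\<in>A. L $ w $ j *\<^sub>R price_process L L' (Suc t) w)
      = (\<Sum>B\<in>{B\<in>F (Suc t). B \<subseteq> A}. \<Sum>w\<in>B. L $ w $ j *\<^sub>R price_process L L' (Suc t) w)"
    by (rule sum_over_subatoms[OF t A])
  also have "\<dots> = (\<Sum>B\<in>{B\<in>F (Suc t). B \<subseteq> A}. \<Sum>w\<in>B. L $ w)"
    using t by (intro sum.cong refl sum_atom_price_process) auto
  also have "\<dots> = (\<Sum>w\<in>A. L $ w)"
    by (rule sum_over_subatoms[OF t A, symmetric])
  also have "\<dots> = (\<Sum>w\<in>A. L $ w $ j *\<^sub>R price_process L L' t w)"
    using t A by (intro sum_atom_price_process[symmetric]) auto
  finally show "(\<Sum>w\<in>A. L $ w $ j *\<^sub>R price_process L L' (Suc t) w)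
      = (\<Sum>w\<in>A. L $ w $ j *\<^sub>R price_process L L' t w)" .
qed (rule meas_price_process)

lemma functional_of_price_process: "functional_of (\<lambda>w. L $ w $ j) (price_process L L') = L"
proof (rule vec_eq_iff[THEN iffD2], rule allI)
  fix w
  have "{w} \<in> F T" using F_T by auto
  then show "functional_of (\<lambda>w. L $ w $ j) (price_process L L') $ w = L $ w"
    using sum_atom_price_process[of T "{w}"] unfolding functional_of_def by simp
qed

end

lemma pricing_functional_representation:
  assumes L: "L \<in> pricing_functionals" and P: "\<forall>w. 0 < P w"
  shows "\<exists>Q S. Pbar T F rate P j Q S \<and> functional_of Q S = L"
proof -
  obtain L' where L': "L' \<in> dual_Ksum" "\<And>w. 0 < L' $ w $ j"
    using dual_Ksum_strictly_positive by blast
  have LD: "L \<in> dual_Ksum" and "(\<Sum>w\<in>UNIV. L $ w $ j) = 1"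
    using L unfolding pricing_functionals_def inner_numeraire by auto
  then have "prob_ac P (\<lambda>w. L $ w $ j)"
    unfolding prob_ac_def using P dual_Ksum_nonneg[OF LD] by (metis less_irrefl)
  then have "Pbar T F rate P j (\<lambda>w. L $ w $ j) (price_process L L')"
    unfolding Pbar_def
    using martingale_price_process[OF LD L'] price_process_in_dual_coneK[OF LD L'] by blast
  then show ?thesis using functional_of_price_process[OF LD L'] by blast
qed

end

locale option_market = market T F rate j
  for T :: nat and F :: "nat \<Rightarrow> ('w::finite) set set"
    and rate :: "nat \<Rightarrow> 'w \<Rightarrow> 'd::finite \<Rightarrow> 'd \<Rightarrow> real" and j :: 'd +
  fixes P :: "'w \<Rightarrow> real" and xi :: "nat \<Rightarrow> 'w \<Rightarrow> real^'d"
  assumes P_pos: "\<forall>w. 0 < P w"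
    and american_option: "american_option T F xi"
begin

definition payoff_vec :: "(nat \<Rightarrow> 'w \<Rightarrow> real) \<Rightarrow> real^'d^'w" where
  "payoff_vec chi = (\<chi> w. \<Sum>t\<le>T. chi t w *\<^sub>R xi t w)"

lemma inner_payoff_vec: "L \<bullet> payoff_vec chi = (\<Sum>w\<in>UNIV. \<Sum>t\<le>T. chi t w * (L $ w \<bullet> xi t w))"
  unfolding payoff_vec_def inner_vec_lambda by (simp add: inner_sum_right)

lemma meas_stopped_payoff_term: "mixed_stopping T F chi \<Longrightarrow> t \<le> T \<Longrightarrow> meas F t (\<lambda>w. chi t w *\<^sub>R xi t w)"
  using american_option unfolding mixed_stopping_def american_option_def by (blast intro: meas_comp2)

lemma expect_stopped_payoff:
  assumes "Pbar T F rate P j Q S" "mixed_stopping T F chi"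
  shows "expect Q (stopped_payoff T xi S chi) = functional_of Q S \<bullet> payoff_vec chi"
proof -
  have "martingale T F Q S" using assms(1) unfolding Pbar_def by blast
  moreover have "expect Q (stopped_payoff T xi S chi)
      = (\<Sum>t\<le>T. \<Sum>w\<in>UNIV. Q w * (S t w \<bullet> (chi t w *\<^sub>R xi t w)))"
    unfolding expect_def stopped_payoff_def
    by (simp add: sum_distrib_left inner_commute mult.assoc sum.swap[of _ UNIV])
  ultimately show ?thesis
    unfolding payoff_vec_def using meas_stopped_payoff_term[OF assms(2)] by (simp add: inner_functional_of)
qed

lemma Phi_bg_imp_Ksum:
  assumes H: "Phi_bg T F rate xi y chi" and y0: "\<forall>w. y 0 w = x *\<^sub>R axis j 1"
  shows "x *\<^sub>R numeraire + payoff_vec chi \<in> Ksum"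
proof -
  define k where "k t w = y t w + chi t w *\<^sub>R xi t w - y (Suc t) w" for t w
  have k: "\<forall>t\<le>T. inK F rate t (k t)" using H unfolding Phi_bg_def k_def by simp
  have yT: "y (Suc T) w = 0" for w using H unfolding Phi_bg_def trading_strategy_def by simp
  have "(\<Sum>t\<le>T. k t w) = x *\<^sub>R axis j 1 + (\<Sum>t\<le>T. chi t w *\<^sub>R xi t w)" for w
  proof -
    have "(\<Sum>t\<le>T. k t w) = (\<Sum>t<Suc T. y t w - y (Suc t) w) + (\<Sum>t\<le>T. chi t w *\<^sub>R xi t w)"
      unfolding k_def lessThan_Suc_atMost by (simp add: sum.distrib[symmetric] algebra_simps)
    also have "(\<Sum>t<Suc T. y t w - y (Suc t) w) = y 0 w - y (Suc T) w"
      by (rule sum_lessThan_telescope')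
    finally show ?thesis using yT y0 by simp
  qed
  then have "x *\<^sub>R numeraire + payoff_vec chi = (\<chi> w. \<Sum>t\<le>T. k t w)"
    unfolding numeraire_def payoff_vec_def by (simp add: vec_eq_iff)
  then show ?thesis using KsumI[OF k] by simp
qed

lemma Ksum_imp_pi_bg_set:
  assumes chi: "mixed_stopping T F chi" and "x *\<^sub>R numeraire + payoff_vec chi \<in> Ksum"
  shows "- x \<in> pi_bg_set T F rate xi j"
proof -
  obtain k where xk: "x *\<^sub>R numeraire + payoff_vec chi = (\<chi> w. \<Sum>t\<le>T. k t w)"
    and k: "\<forall>t\<le>T. inK F rate t (k t)"
    using KsumE[OF assms(2)] by blast
  have sum_k: "(\<Sum>t\<le>T. k t w) = x *\<^sub>R axis j 1 + (\<Sum>t\<le>T. chi t w *\<^sub>R xi t w)" for w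
  proof -
    have "(\<chi> w. \<Sum>t\<le>T. k t w) $ w = (x *\<^sub>R numeraire + payoff_vec chi) $ w" using xk by simp
    then show ?thesis unfolding numeraire_def payoff_vec_def by simp
  qed
  text \<open>Hold \<open>x e\<^sup>j\<close>, collect the exercised payoffs and give away the solvent positions \<open>k\<^sub>t\<close>.\<close>
  define g where "g s w = chi s w *\<^sub>R xi s w - k s w" for s w
  define y where "y t w = (if t \<le> T then x *\<^sub>R axis j 1 + (\<Sum>s<t. g s w) else 0)" for t w
  have "meas F s (g s)" if "s < T" for s
    unfolding g_def using meas_stopped_payoff_term[OF chi] k that
    by (auto simp: inK_def intro: meas_comp2)
  then have "trading_strategy T F y"
    by (rule trading_strategy_partial_sums) (simp_all add: y_def)
  moreover have "inK F rate t (\<lambda>w. y t w + chi t w *\<^sub>R xi t w - y (Suc t) w)" if t: "t \<le> T" for t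
  proof -
    have "y t w + chi t w *\<^sub>R xi t w - y (Suc t) w = k t w" for w
    proof (cases "t < T")
      case True
      then show ?thesis by (simp add: y_def g_def)
    next
      case False
      then have "t = T" using t by simp
      let ?C = "\<Sum>s<T. chi s w *\<^sub>R xi s w" and ?K = "\<Sum>s<T. k s w"
      have "(\<Sum>s<T. g s w) = ?C - ?K"
        unfolding g_def by (rule sum_subtractf)
      then have "y t w + chi t w *\<^sub>R xi t w - y (Suc t) w = x *\<^sub>R axis j 1 + (?C - ?K) + chi T w *\<^sub>R xi T w"
        using \<open>t = T\<close> by (simp add: y_def)
      also have "\<dots> = (x *\<^sub>R axis j 1 + ?C + chi T w *\<^sub>R xi T w) - ?K" by (simp add: algebra_simps)
      also have "x *\<^sub>R axis j 1 + ?C + chi T w *\<^sub>R xi T w = ?K + k T w"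
        using sum_k[of w] by (simp add: lessThan_Suc_atMost[symmetric] add.assoc)
      finally show ?thesis using \<open>t = T\<close> by simp
    qed
    then have "(\<lambda>w. y t w + chi t w *\<^sub>R xi t w - y (Suc t) w) = k t" by (rule ext)
    then show ?thesis using k t by simp
  qed
  ultimately have "Phi_bg T F rate xi y chi" unfolding Phi_bg_def using chi by blast
  moreover have "\<forall>w. y 0 w = x *\<^sub>R axis j 1" by (simp add: y_def)
  ultimately show ?thesis unfolding pi_bg_set_def by blast
qed

lemma pi_bg_set_le_pricing:
  assumes "s \<in> pi_bg_set T F rate xi j"
  obtains chi where "mixed_stopping T F chi" "\<forall>L\<in>pricing_functionals. s \<le> L \<bullet> payoff_vec chi"
proof -
  obtain x y chi where s: "s = - x" and H: "Phi_bg T F rate xi y chi"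
    and y0: "\<forall>w. y 0 w = x *\<^sub>R axis j 1"
    using assms unfolding pi_bg_set_def by blast
  have "s \<le> L \<bullet> payoff_vec chi" if L: "L \<in> pricing_functionals" for L
  proof -
    have "0 \<le> L \<bullet> (x *\<^sub>R numeraire + payoff_vec chi)"
      using Phi_bg_imp_Ksum[OF H y0] L unfolding pricing_functionals_def dual_Ksum_def by blast
    then show ?thesis using L s unfolding pricing_functionals_def by (simp add: inner_add_right)
  qed
  moreover have "mixed_stopping T F chi" using H unfolding Phi_bg_def by blast
  ultimately show ?thesis using that by blast
qed

text \<open>
  If \<open>-m e\<^sup>j + payoff_vec \<chi>\<close> were outside \<open>Ksum\<close> for the minimum \<open>m\<close>, normalising the sum of the
  minimiser and a separating dual element would give a pricing functional below \<open>m\<close>.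
\<close>

lemma min_pricing_in_pi_bg_set:
  assumes chi: "mixed_stopping T F chi"
  obtains Lm where "Lm \<in> pricing_functionals"
    "\<forall>L\<in>pricing_functionals. Lm \<bullet> payoff_vec chi \<le> L \<bullet> payoff_vec chi"
    "Lm \<bullet> payoff_vec chi \<in> pi_bg_set T F rate xi j"
proof -
  have "continuous_on pricing_functionals (\<lambda>L. L \<bullet> payoff_vec chi)" by (intro continuous_intros)
  then obtain Lm where Lm: "Lm \<in> pricing_functionals"
    and min: "\<forall>L\<in>pricing_functionals. Lm \<bullet> payoff_vec chi \<le> L \<bullet> payoff_vec chi"
    using continuous_attains_inf[OF compact_pricing_functionals pricing_functionals_nonempty] by blast
  define m where "m = Lm \<bullet> payoff_vec chi"
  have "(- m) *\<^sub>R numeraire + payoff_vec chi \<in> Ksum"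
  proof (rule ccontr)
    assume "(- m) *\<^sub>R numeraire + payoff_vec chi \<notin> Ksum"
    then obtain L where L: "L \<in> dual_Ksum" and neg: "L \<bullet> ((- m) *\<^sub>R numeraire + payoff_vec chi) < 0"
      using dual_Ksum_separates by blast
    have e0: "0 \<le> L \<bullet> numeraire" by (rule dual_Ksum_inner_numeraire_nonneg[OF L])
    have LmD: "Lm \<in> dual_Ksum" and Lm1: "Lm \<bullet> numeraire = 1"
      using Lm unfolding pricing_functionals_def by auto
    define L' where "L' = (1 / (1 + L \<bullet> numeraire)) *\<^sub>R (Lm + L)"
    have "L' \<in> dual_Ksum"
      unfolding L'_def using convex_cone_add[OF convex_cone_dual_Ksum LmD L] e0
      by (simp add: convex_cone_scaleR[OF convex_cone_dual_Ksum])
    moreover have "L' \<bullet> numeraire = 1" unfolding L'_def using Lm1 e0 by (simp add: inner_add_left)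
    ultimately have "L' \<in> pricing_functionals" unfolding pricing_functionals_def by blast
    moreover have "L' \<bullet> payoff_vec chi < m"
    proof -
      have "m + L \<bullet> payoff_vec chi < m * (1 + L \<bullet> numeraire)"
        using neg by (simp add: inner_add_right algebra_simps)
      then show ?thesis
        unfolding L'_def m_def using e0 by (simp add: inner_add_left divide_less_eq)
    qed
    ultimately show False using min unfolding m_def by force
  qed
  then have "- (- m) \<in> pi_bg_set T F rate xi j" by (rule Ksum_imp_pi_bg_set[OF chi])
  then show ?thesis using that[OF Lm min] unfolding m_def by simp
qed

lemma pi_bg_set_bdd_above: "bdd_above (pi_bg_set T F rate xi j)"
proof -
  obtain L0 where L0: "L0 \<in> pricing_functionals" using pricing_functionals_nonempty by blast
  have "s \<le> (\<Sum>w\<in>UNIV. \<Sum>t\<le>T. \<bar>L0 $ w \<bullet> xi t w\<bar>)" if s: "s \<in> pi_bg_set T F rate xi j" for s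
  proof -
    obtain chi where chi: "mixed_stopping T F chi"
      and "\<forall>L\<in>pricing_functionals. s \<le> L \<bullet> payoff_vec chi"
      using pi_bg_set_le_pricing[OF s] by blast
    then have "s \<le> L0 \<bullet> payoff_vec chi" using L0 by blast
    also have "\<dots> \<le> (\<Sum>w\<in>UNIV. \<Sum>t\<le>T. \<bar>L0 $ w \<bullet> xi t w\<bar>)"
      unfolding inner_payoff_vec
    proof (intro sum_mono)
      fix w t assume "t \<in> {..T}"
      then have "0 \<le> chi t w" "chi t w \<le> 1" using chi unfolding mixed_stopping_def by auto
      then have "\<bar>chi t w * (L0 $ w \<bullet> xi t w)\<bar> \<le> \<bar>L0 $ w \<bullet> xi t w\<bar>"
        by (simp add: abs_mult mult_left_le_one_le)
      then show "chi t w * (L0 $ w \<bullet> xi t w) \<le> \<bar>L0 $ w \<bullet> xi t w\<bar>"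
        by (rule order_trans[OF abs_ge_self])
    qed
    finally show ?thesis .
  qed
  then show ?thesis unfolding bdd_above_def by blast
qed

lemma min_expectation_in_pi_bg_set:
  assumes chi: "mixed_stopping T F chi"
  shows "\<exists>Q S. Pbar T F rate P j Q S
    \<and> (\<forall>Q' S'. Pbar T F rate P j Q' S' \<longrightarrow>
          expect Q (stopped_payoff T xi S chi) \<le> expect Q' (stopped_payoff T xi S' chi))
    \<and> expect Q (stopped_payoff T xi S chi) \<in> pi_bg_set T F rate xi j"
proof -
  obtain Lm where Lm: "Lm \<in> pricing_functionals"
    and min: "\<forall>L\<in>pricing_functionals. Lm \<bullet> payoff_vec chi \<le> L \<bullet> payoff_vec chi"
    and mem: "Lm \<bullet> payoff_vec chi \<in> pi_bg_set T F rate xi j"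
    using min_pricing_in_pi_bg_set[OF chi] by blast
  obtain Q S where PB: "Pbar T F rate P j Q S" and "functional_of Q S = Lm"
    using pricing_functional_representation[OF Lm P_pos] by blast
  then have E: "expect Q (stopped_payoff T xi S chi) = Lm \<bullet> payoff_vec chi"
    using expect_stopped_payoff[OF PB chi] by simp
  show ?thesis
  proof (intro exI conjI allI impI)
    fix Q' S' assume PB': "Pbar T F rate P j Q' S'"
    show "expect Q (stopped_payoff T xi S chi) \<le> expect Q' (stopped_payoff T xi S' chi)"
      unfolding E expect_stopped_payoff[OF PB' chi]
      using min functional_of_in_pricing_functionals[OF PB'] by blast
  qed (use PB mem E in simp_all)
qed

lemma optimal_mixed_stopping:
  "\<exists>chi. mixed_stopping T F chi \<and>
     (\<forall>Q S. Pbar T F rate P j Q S \<longrightarrow> pi_bg T F rate xi j \<le> expect Q (stopped_payoff T xi S chi))"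
proof -
  let ?pi = "pi_bg T F rate xi j"
  have "pi_bg_set T F rate xi j \<noteq> {}"
    using min_pricing_in_pi_bg_set[OF mixed_stopping_at_0] by blast
  have "\<exists>chi. mixed_stopping T F chi \<and>
          (\<forall>L\<in>pricing_functionals. ?pi - inverse (real (Suc n)) < L \<bullet> payoff_vec chi)" for n
  proof -
    have "?pi - inverse (real (Suc n)) < ?pi" by simp
    then obtain s where s: "s \<in> pi_bg_set T F rate xi j" and "?pi - inverse (real (Suc n)) < s"
      using \<open>pi_bg_set T F rate xi j \<noteq> {}\<close> unfolding pi_bg_def by (blast elim: less_cSupE)
    moreover obtain chi where "mixed_stopping T F chi" "\<forall>L\<in>pricing_functionals. s \<le> L \<bullet> payoff_vec chi"
      using pi_bg_set_le_pricing[OF s] by blast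
    ultimately show ?thesis by force
  qed
  then obtain c where c_approx: "\<forall>n. mixed_stopping T F (c n) \<and>
      (\<forall>L\<in>pricing_functionals. ?pi - inverse (real (Suc n)) < L \<bullet> payoff_vec (c n))"
    using choice[of "\<lambda>n chi. mixed_stopping T F chi \<and>
      (\<forall>L\<in>pricing_functionals. ?pi - inverse (real (Suc n)) < L \<bullet> payoff_vec chi)"] by blast
  then have c: "mixed_stopping T F (c n)" for n by blast
  obtain r chi where r: "strict_mono r" and chi: "mixed_stopping T F chi"
    and lim: "\<forall>t\<le>T. \<forall>w. (\<lambda>n. c (r n) t w) \<longlonglongrightarrow> chi t w"
    using mixed_stopping_convergent_subseq[where c = c, OF c] by blast
  have "?pi \<le> L \<bullet> payoff_vec chi" if L: "L \<in> pricing_functionals" for L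
  proof (rule LIMSEQ_le)
    have "(\<lambda>n. inverse (real (Suc (r n)))) \<longlonglongrightarrow> 0"
      using LIMSEQ_subseq_LIMSEQ[OF LIMSEQ_inverse_real_of_nat r] by (simp add: comp_def)
    then show "(\<lambda>n. ?pi - inverse (real (Suc (r n)))) \<longlonglongrightarrow> ?pi"
      using tendsto_diff[OF tendsto_const, of _ 0 sequentially ?pi] by simp
    show "(\<lambda>n. L \<bullet> payoff_vec (c (r n))) \<longlonglongrightarrow> L \<bullet> payoff_vec chi"
      unfolding inner_payoff_vec using lim by (intro tendsto_intros) auto
    show "\<exists>N. \<forall>n\<ge>N. ?pi - inverse (real (Suc (r n))) \<le> L \<bullet> payoff_vec (c (r n))"
      using c_approx L by (meson less_imp_le)
  qed
  then have "?pi \<le> expect Q (stopped_payoff T xi S chi)" if "Pbar T F rate P j Q S" for Q S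
    unfolding expect_stopped_payoff[OF that chi] using functional_of_in_pricing_functionals[OF that] .
  then show ?thesis using chi by blast
qed

end

theorem theorem5p6:
  fixes T :: nat
    and F :: "nat \<Rightarrow> ('w::finite) set set"
    and P :: "'w \<Rightarrow> real"
    and rate :: "nat \<Rightarrow> 'w \<Rightarrow> 'd::finite \<Rightarrow> 'd \<Rightarrow> real"
    and xi :: "nat \<Rightarrow> 'w \<Rightarrow> real^'d"
    and j :: 'd
  assumes "filtration T F"
    and "\<forall>w. P w > 0" and "(\<Sum>w\<in>UNIV. P w) = 1"
    and "exchange_rates T F rate"
    and "no_arbitrage T F rate"
    and "american_option T F xi"
  shows "pi_bg_set T F rate xi j \<noteq> {} \<and> bdd_above (pi_bg_set T F rate xi j)
    \<and> (\<forall>chi. mixed_stopping T F chi \<longrightarrow>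
          (\<exists>Q S. Pbar T F rate P j Q S
             \<and> (\<forall>Q' S'. Pbar T F rate P j Q' S' \<longrightarrow>
                   expect Q (stopped_payoff T xi S chi) \<le> expect Q' (stopped_payoff T xi S' chi))
             \<and> expect Q (stopped_payoff T xi S chi) \<le> pi_bg T F rate xi j))
    \<and> (\<exists>chi0 Q0 S0. mixed_stopping T F chi0 \<and> Pbar T F rate P j Q0 S0
          \<and> pi_bg T F rate xi j = expect Q0 (stopped_payoff T xi S0 chi0)
          \<and> (\<forall>Q S. Pbar T F rate P j Q S \<longrightarrow>
                expect Q0 (stopped_payoff T xi S0 chi0) \<le> expect Q (stopped_payoff T xi S chi0)))"
proof -
  interpret option_market T F rate j P xi
    by unfold_locales (use assms in auto)
  have le_pi_bg: "s \<le> pi_bg T F rate xi j" if "s \<in> pi_bg_set T F rate xi j" for s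
    unfolding pi_bg_def using that pi_bg_set_bdd_above by (rule cSup_upper)
  obtain chi0 where chi0: "mixed_stopping T F chi0"
    and opt: "\<forall>Q S. Pbar T F rate P j Q S \<longrightarrow> pi_bg T F rate xi j \<le> expect Q (stopped_payoff T xi S chi0)"
    using optimal_mixed_stopping by blast
  obtain Q0 S0 where Q0S0: "Pbar T F rate P j Q0 S0"
    and min: "\<forall>Q S. Pbar T F rate P j Q S \<longrightarrow>
      expect Q0 (stopped_payoff T xi S0 chi0) \<le> expect Q (stopped_payoff T xi S chi0)"
    and mem: "expect Q0 (stopped_payoff T xi S0 chi0) \<in> pi_bg_set T F rate xi j"
    using min_expectation_in_pi_bg_set[OF chi0] by blast
  have "pi_bg T F rate xi j = expect Q0 (stopped_payoff T xi S0 chi0)"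
    using le_pi_bg[OF mem] opt Q0S0 by (simp add: order_antisym)
  then show ?thesis
    using min_expectation_in_pi_bg_set[OF mixed_stopping_at_0] min_expectation_in_pi_bg_set
      le_pi_bg pi_bg_set_bdd_above chi0 Q0S0 min
    by blast
qed

end
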